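(* Consider the following recursive procedure on input $(T,C,w)$, where $T=(V,E)$ is a tree, $w:V\to\mathbb R_{\ge0}$, and $C$ is a partial coloring with domain $\mathrm{support}(w)=\{v:w(v)>0\}$: if $V\setminus\mathrm{support}(w)$ is a cover of $(T,C)$, return $X=V\setminus\mathrm{support}(w)$; otherwise choose two pairs of (not necessarily distinct) vertices $(x_1,x_2)$, $(y_1,y_2)$ in $\mathrm{support}(w)$ with $C(x_1)=C(x_2)\neq C(y_1)=C(y_2)$ and $\mathrm{carrier}(\{x_1,x_2\})\cap\mathrm{carrier}(\{y_1,y_2\})\neq\emptyset$, let $\varepsilon=\min\{w(x_1),w(x_2),w(y_1),w(y_2)\}$, let $w_1=w-\varepsilon\cdot\mathbf 1_{\{x_1,x_2,y_1,y_2\}}$, and return the output of the procedure on $(T,C|_{\mathrm{support}(w_1)},w_1)$. Then the procedure is well defined (whenever $V\setminus\mathrm{support}(w)$ is not a cover, such pairs exist), terminates, and returns a cover $X$ of $(T,C)$ with $w(X)\le 4\,\mathrm{OPT}(T,C,w)$.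
   Context: For $U\subseteq V$, $\mathrm{carrier}(U)$ is the minimal connected subtree of $T$ containing $U$. A partial coloring of a tree is convex if it can be extended to a total coloring in which every color class induces a connected subtree. A set $X\subseteq V$ is a cover of $(T,C)$ if the restriction of $C$ to $\mathrm{Domain}(C)\setminus X$ is convex. $w(X)=\sum_{v\in X}w(v)$, and $\mathrm{OPT}(T,C,w)$ is the minimum of $w(X)$ over all covers $X$. *)

theory Defs
  imports Complex_Main
begin

definition induced_rel :: "'v set set \<Rightarrow> 'v set \<Rightarrow> ('v \<times> 'v) set" where
  "induced_rel E S = {(a, b). {a, b} \<in> E \<and> a \<in> S \<and> b \<in> S}"

text \<open>S induces a connected subgraph (the empty set counts as connected).\<close>
definition connected_in :: "'v set set \<Rightarrow> 'v set \<Rightarrow> bool" where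
  "connected_in E S \<longleftrightarrow> (\<forall>u\<in>S. \<forall>v\<in>S. (u, v) \<in> (induced_rel E S)\<^sup>*)"

definition is_tree :: "'v set \<Rightarrow> 'v set set \<Rightarrow> bool" where
  "is_tree V E \<longleftrightarrow> finite V \<and> V \<noteq> {} \<and> (\<forall>e\<in>E. e \<subseteq> V \<and> card e = 2)
     \<and> connected_in E V \<and> card E = card V - 1"

definition carrier :: "'v set \<Rightarrow> 'v set set \<Rightarrow> 'v set \<Rightarrow> 'v set" where
  "carrier V E U = \<Inter>{S. U \<subseteq> S \<and> S \<subseteq> V \<and> connected_in E S}"

text \<open>Partial colorings are maps 'v => 'c option; the domain is {v. C v ~= None}.\<close>
definition convex :: "'v set \<Rightarrow> 'v set set \<Rightarrow> ('v \<Rightarrow> 'c option) \<Rightarrow> bool" where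
  "convex V E C \<longleftrightarrow> (\<exists>f :: 'v \<Rightarrow> 'c. (\<forall>v\<in>V. \<forall>c. C v = Some c \<longrightarrow> f v = c)
      \<and> (\<forall>c. connected_in E {v\<in>V. f v = c}))"

definition restrict_col :: "('v \<Rightarrow> 'c option) \<Rightarrow> 'v set \<Rightarrow> 'v \<Rightarrow> 'c option" where
  "restrict_col C S = (\<lambda>v. if v \<in> S then C v else None)"

definition is_cover :: "'v set \<Rightarrow> 'v set set \<Rightarrow> ('v \<Rightarrow> 'c option) \<Rightarrow> 'v set \<Rightarrow> bool" where
  "is_cover V E C X \<longleftrightarrow> X \<subseteq> V \<and> convex V E (restrict_col C ({v. C v \<noteq> None} - X))"

definition OPT :: "'v set \<Rightarrow> 'v set set \<Rightarrow> ('v \<Rightarrow> 'c option) \<Rightarrow> ('v \<Rightarrow> real) \<Rightarrow> real" where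
  "OPT V E C w = Min {sum w X | X. is_cover V E C X}"

definition supp :: "'v set \<Rightarrow> ('v \<Rightarrow> real) \<Rightarrow> 'v set" where
  "supp V w = {v\<in>V. w v > 0}"

definition valid_choice :: "'v set \<Rightarrow> 'v set set \<Rightarrow> ('v \<Rightarrow> 'c option) \<Rightarrow> ('v \<Rightarrow> real)
    \<Rightarrow> 'v \<Rightarrow> 'v \<Rightarrow> 'v \<Rightarrow> 'v \<Rightarrow> bool" where
  "valid_choice V E C w x1 x2 y1 y2 \<longleftrightarrow>
     {x1, x2, y1, y2} \<subseteq> supp V w \<and> C x1 = C x2 \<and> C y1 = C y2 \<and> C x1 \<noteq> C y1
     \<and> carrier V E {x1, x2} \<inter> carrier V E {y1, y2} \<noteq> {}"

definition new_weight :: "('v \<Rightarrow> real) \<Rightarrow> 'v \<Rightarrow> 'v \<Rightarrow> 'v \<Rightarrow> 'v \<Rightarrow> 'v \<Rightarrow> real" where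
  "new_weight w x1 x2 y1 y2 =
     (let \<epsilon> = Min {w x1, w x2, w y1, w y2}
      in (\<lambda>v. if v \<in> {x1, x2, y1, y2} then w v - \<epsilon> else w v))"

definition proc_step :: "'v set \<Rightarrow> 'v set set \<Rightarrow> ('v \<Rightarrow> 'c option) \<times> ('v \<Rightarrow> real)
    \<Rightarrow> ('v \<Rightarrow> 'c option) \<times> ('v \<Rightarrow> real) \<Rightarrow> bool" where
  "proc_step V E s s' \<longleftrightarrow> (let (C, w) = s; (C', w') = s' in
     \<not> is_cover V E C (V - supp V w) \<and>
     (\<exists>x1 x2 y1 y2. valid_choice V E C w x1 x2 y1 y2
        \<and> w' = new_weight w x1 x2 y1 y2 \<and> C' = restrict_col C (supp V w')))"

text \<open>proc_out V E C w X: X is a possible output of the (nondeterministic) procedure.\<close>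
inductive proc_out :: "'v set \<Rightarrow> 'v set set \<Rightarrow> ('v \<Rightarrow> 'c option) \<Rightarrow> ('v \<Rightarrow> real) \<Rightarrow> 'v set \<Rightarrow> bool"
  for V E where
  stop: "is_cover V E C (V - supp V w) \<Longrightarrow> proc_out V E C w (V - supp V w)"
| rec: "proc_step V E (C, w) (C', w') \<Longrightarrow> proc_out V E C' w' X \<Longrightarrow> proc_out V E C w X"

end

theory Submission
  imports Defs
begin

(* The procedure is a local-ratio algorithm. If two same-coloured pairs of different colours
   have intersecting carriers, every cover must contain one of these (at most four) vertices;
   lowering their weights by \<epsilon> therefore lowers OPT by at least \<epsilon>, while the output pays
   at most 4\<epsilon> for them, and induction along the recursion gives the factor 4. The lowered
   weights vanish on at least one vertex, so the support shrinks and the recursion terminates.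
   Well-definedness is a Helly-type property of trees: a partial colouring is convex as soon
   as the carriers of same-coloured pairs of distinct colours are pairwise disjoint, which is
   proved by removing a leaf and extending a convex colouring of the smaller tree. *)

section \<open>Trees, leaves and carriers\<close>

lemma connected_in_subset_singleton: "S \<subseteq> {x} \<Longrightarrow> connected_in E S"
  unfolding connected_in_def by auto

lemma connected_in_mono_edges:
  assumes "E \<subseteq> E'" "connected_in E S"
  shows "connected_in E' S"
proof -
  have "induced_rel E S \<subseteq> induced_rel E' S"
    using assms(1) unfolding induced_rel_def by auto
  then show ?thesis
    using assms(2) rtrancl_mono unfolding connected_in_def by blast
qed

lemma connected_in_insert:
  assumes "connected_in E S" "n \<in> S" "{l, n} \<in> E"
  shows "connected_in E (insert l S)"
  unfolding connected_in_def
proof (intro ballI)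
  let ?R = "induced_rel E (insert l S)"
  have "(induced_rel E S)\<^sup>* \<subseteq> ?R\<^sup>*"
    by (rule rtrancl_mono) (auto simp: induced_rel_def)
  then have S: "\<forall>u\<in>S. \<forall>v\<in>S. (u, v) \<in> ?R\<^sup>*"
    using assms(1) unfolding connected_in_def by blast
  have "(l, n) \<in> ?R" "(n, l) \<in> ?R"
    using assms(2,3) by (auto simp: induced_rel_def insert_commute)
  then have "(u, n) \<in> ?R\<^sup>*" "(n, u) \<in> ?R\<^sup>*" if "u \<in> insert l S" for u
    using that S assms(2) by auto
  then show "(u, v) \<in> ?R\<^sup>*" if "u \<in> insert l S" "v \<in> insert l S" for u v
    using that rtrancl_trans by metis
qed

definition leaf_edge :: "'v set set \<Rightarrow> 'v \<Rightarrow> 'v \<Rightarrow> bool" where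
  "leaf_edge E l n \<longleftrightarrow> l \<noteq> n \<and> {l, n} \<in> E \<and> (\<forall>e\<in>E. l \<in> e \<longrightarrow> e = {l, n})"

lemma leaf_edge_unique_neighbour: "leaf_edge E l n \<Longrightarrow> {l, m} \<in> E \<Longrightarrow> m = n"
  unfolding leaf_edge_def by (metis doubleton_eq_iff insertI1)

lemma rtrancl_induced_rel_remove_leaf:
  assumes "leaf_edge E l n" "(u, v) \<in> (induced_rel E S)\<^sup>*" "u \<noteq> l"
  shows "(u, if v = l then n else v) \<in> (induced_rel E (S - {l}))\<^sup>*"
  using assms(2)
proof (induction rule: rtrancl_induct)
  case base
  then show ?case using assms(3) by simp
next
  case (step y z)
  then have yz: "{y, z} \<in> E" "y \<in> S" "z \<in> S" by (auto simp: induced_rel_def)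
  consider "z = l" | "y = l" | "y \<noteq> l" "z \<noteq> l" by blast
  then show ?case
  proof cases
    case 1
    then have "y = n" using leaf_edge_unique_neighbour[OF assms(1)] yz(1) by (metis insert_commute)
    then show ?thesis using step.IH 1 assms(1) by (auto simp: leaf_edge_def)
  next
    case 2
    then have "z = n" using leaf_edge_unique_neighbour[OF assms(1)] yz(1) by simp
    then show ?thesis using step.IH 2 by auto
  next
    case 3
    then have "(y, z) \<in> induced_rel E (S - {l})" using yz by (auto simp: induced_rel_def)
    then show ?thesis using step.IH 3 by (auto intro: rtrancl_into_rtrancl)
  qed
qed

lemma connected_in_remove_leaf:
  assumes "leaf_edge E l n" "connected_in E S"
  shows "connected_in (E - {{l, n}}) (S - {l})"
proof -
  have "(u, v) \<in> (induced_rel E (S - {l}))\<^sup>*" if "u \<in> S - {l}" "v \<in> S - {l}" for u v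
    using that assms(2) rtrancl_induced_rel_remove_leaf[OF assms(1), of u v S]
    unfolding connected_in_def by auto
  moreover have "induced_rel (E - {{l, n}}) (S - {l}) = induced_rel E (S - {l})"
    unfolding induced_rel_def by (auto simp: doubleton_eq_iff)
  ultimately show ?thesis unfolding connected_in_def by simp
qed

lemma leaf_edge_neighbour_mem:
  assumes "leaf_edge E l n" "connected_in E S" "l \<in> S" "x \<in> S" "x \<noteq> l"
  shows "n \<in> S"
proof -
  have "(l, x) \<in> (induced_rel E S)\<^sup>*" using assms(2-4) unfolding connected_in_def by blast
  then obtain m where "(l, m) \<in> induced_rel E S"
    using assms(5) by (cases rule: converse_rtranclE) auto
  then have "{l, m} \<in> E" "m \<in> S" by (auto simp: induced_rel_def)
  then show ?thesis using leaf_edge_unique_neighbour[OF assms(1)] by blast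
qed

lemma carrier_least: "U \<subseteq> S \<Longrightarrow> S \<subseteq> V \<Longrightarrow> connected_in E S \<Longrightarrow> carrier V E U \<subseteq> S"
  unfolding carrier_def by blast

lemma carrier_singleton:
  assumes "x \<in> V"
  shows "carrier V E {x} = {x}"
proof
  show "carrier V E {x} \<subseteq> {x}"
    using assms by (intro carrier_least connected_in_subset_singleton) auto
  show "{x} \<subseteq> carrier V E {x}" unfolding carrier_def by blast
qed

lemma carrier_remove_leaf:
  assumes "leaf_edge E l n" "U \<subseteq> V - {l}"
  shows "carrier (V - {l}) (E - {{l, n}}) U \<subseteq> carrier V E U"
  unfolding carrier_def[of V E U]
proof (rule Inter_greatest)
  fix S assume "S \<in> {S. U \<subseteq> S \<and> S \<subseteq> V \<and> connected_in E S}"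
  then have "carrier (V - {l}) (E - {{l, n}}) U \<subseteq> S - {l}"
    using assms connected_in_remove_leaf[OF assms(1)] by (intro carrier_least) auto
  then show "carrier (V - {l}) (E - {{l, n}}) U \<subseteq> S" by blast
qed

lemma carrier_remove_leaf_pair:
  assumes "leaf_edge E l n" "x \<noteq> l"
  shows "carrier (V - {l}) (E - {{l, n}}) {n, x} \<subseteq> carrier V E {l, x}"
  unfolding carrier_def[of V E "{l, x}"]
proof (rule Inter_greatest)
  fix S assume S: "S \<in> {S. {l, x} \<subseteq> S \<and> S \<subseteq> V \<and> connected_in E S}"
  then have "n \<in> S" using leaf_edge_neighbour_mem[OF assms(1)] assms(2) by blast
  then have "carrier (V - {l}) (E - {{l, n}}) {n, x} \<subseteq> S - {l}"
    using S assms connected_in_remove_leaf[OF assms(1)]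
    by (intro carrier_least) (auto simp: leaf_edge_def)
  then show "carrier (V - {l}) (E - {{l, n}}) {n, x} \<subseteq> S" by blast
qed

lemma leaf_neighbour_in_carrier:
  assumes "leaf_edge E l n" "x \<noteq> l"
  shows "n \<in> carrier V E {l, x}"
  unfolding carrier_def using leaf_edge_neighbour_mem[OF assms(1)] assms(2) by blast

lemma handshake:
  assumes "finite V" "finite E" "\<forall>e\<in>E. e \<subseteq> V \<and> card e = 2"
  shows "(\<Sum>v\<in>V. card {e\<in>E. v \<in> e}) = 2 * card E"
proof -
  have "(\<Sum>v\<in>V. card {e\<in>E. v \<in> e}) = (\<Sum>v\<in>V. \<Sum>e\<in>E. if v \<in> e then 1 else 0)"
    using assms(2) by (simp add: sum.inter_filter[symmetric])
  also have "\<dots> = (\<Sum>e\<in>E. \<Sum>v\<in>V. if v \<in> e then 1 else 0)"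
    by (rule sum.swap)
  also have "\<dots> = (\<Sum>e\<in>E. card {v\<in>V. v \<in> e})"
    using assms(1) by (simp add: sum.inter_filter[symmetric])
  also have "\<dots> = (\<Sum>e\<in>E. 2)"
  proof (rule sum.cong)
    fix e assume "e \<in> E"
    then have "{v\<in>V. v \<in> e} = e" using assms(3) by auto
    then show "card {v\<in>V. v \<in> e} = 2" using assms(3) \<open>e \<in> E\<close> by simp
  qed simp
  finally show ?thesis by simp
qed

lemma is_tree_finite_edges: "is_tree V E \<Longrightarrow> finite E"
  unfolding is_tree_def by (intro finite_subset[of E "Pow V"]) auto

lemma tree_low_degree_vertex:
  assumes "is_tree V E" "2 \<le> card V"
  shows "\<exists>l\<in>V. card {e\<in>E. l \<in> e} \<le> 1"
proof (rule ccontr)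
  assume "\<not> ?thesis"
  then have "(\<Sum>v\<in>V. 2) \<le> (\<Sum>v\<in>V. card {e\<in>E. v \<in> e})"
    by (intro sum_mono) auto
  also have "\<dots> = 2 * card E"
    using assms(1) handshake[of V E] is_tree_finite_edges[of V E] unfolding is_tree_def by simp
  finally show False using assms unfolding is_tree_def by simp
qed

lemma tree_has_leaf:
  assumes T: "is_tree V E" and two: "2 \<le> card V"
  shows "\<exists>l n. l \<in> V \<and> n \<in> V \<and> leaf_edge E l n"
proof -
  obtain l where l: "l \<in> V" "card {e\<in>E. l \<in> e} \<le> 1"
    using tree_low_degree_vertex[OF assms] by blast
  have "V \<noteq> {l}" using two by auto
  then obtain u where u: "u \<in> V" "u \<noteq> l" using l(1) by blast
  have "(l, u) \<in> (induced_rel E V)\<^sup>*"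
    using T l u unfolding is_tree_def connected_in_def by blast
  then obtain m where "(l, m) \<in> induced_rel E V"
    using u(2) by (cases rule: converse_rtranclE) auto
  then have lm: "{l, m} \<in> E" "m \<in> V" by (auto simp: induced_rel_def)
  have "{e\<in>E. l \<in> e} = {{l, m}}"
    using l(2) lm(1) is_tree_finite_edges[OF T] card_le_Suc0_iff_eq[of "{e\<in>E. l \<in> e}"] by auto
  moreover have "l \<noteq> m" using T lm(1) unfolding is_tree_def by fastforce
  ultimately have "leaf_edge E l m" using lm(1) unfolding leaf_edge_def by blast
  then show ?thesis using l lm by blast
qed

lemma is_tree_remove_leaf:
  assumes T: "is_tree V E" and leaf: "leaf_edge E l n" and "l \<in> V" "n \<in> V"
  shows "is_tree (V - {l}) (E - {{l, n}})"
proof -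
  have "\<forall>e\<in>E - {{l, n}}. e \<subseteq> V - {l} \<and> card e = 2"
    using T leaf unfolding is_tree_def leaf_edge_def by blast
  moreover have "connected_in (E - {{l, n}}) (V - {l})"
    using T connected_in_remove_leaf[OF leaf] unfolding is_tree_def by blast
  moreover have "card (E - {{l, n}}) = card (V - {l}) - 1"
    using T leaf assms(3) is_tree_finite_edges[OF T]
    unfolding is_tree_def leaf_edge_def by (simp add: card_Diff_singleton)
  moreover have "V - {l} \<noteq> {}" using assms(4) leaf unfolding leaf_edge_def by auto
  ultimately show ?thesis using T unfolding is_tree_def by simp
qed

section \<open>Convexity of partial colourings\<close>

definition carriers_disjoint :: "'v set \<Rightarrow> 'v set set \<Rightarrow> ('v \<Rightarrow> 'c option) \<Rightarrow> bool" where
  "carriers_disjoint V E C \<longleftrightarrow>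
     (\<forall>x1 x2 y1 y2 a b. C x1 = Some a \<longrightarrow> C x2 = Some a \<longrightarrow> C y1 = Some b \<longrightarrow> C y2 = Some b
        \<longrightarrow> a \<noteq> b \<longrightarrow> carrier V E {x1, x2} \<inter> carrier V E {y1, y2} = {})"

text \<open>The last clause is the invariant that makes the leaf induction work: a colour
  carried only by the removed leaf must not reappear on the rest of the tree.\<close>
definition convex_extension :: "'v set \<Rightarrow> 'v set set \<Rightarrow> ('v \<Rightarrow> 'c option) \<Rightarrow> ('v \<Rightarrow> 'c) \<Rightarrow> bool" where
  "convex_extension V E C f \<longleftrightarrow> (\<forall>v\<in>V. \<forall>c. C v = Some c \<longrightarrow> f v = c)
     \<and> (\<forall>c. connected_in E {v\<in>V. f v = c}) \<and> (ran C \<noteq> {} \<longrightarrow> f ` V \<subseteq> ran C)"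

lemma convex_extensionI:
  assumes "\<And>v c. v \<in> V \<Longrightarrow> C v = Some c \<Longrightarrow> f v = c" "\<And>c. connected_in E {v\<in>V. f v = c}"
    and "ran C \<noteq> {} \<Longrightarrow> f ` V \<subseteq> ran C"
  shows "convex_extension V E C f"
  using assms unfolding convex_extension_def by blast

lemma convex_extensionD:
  assumes "convex_extension V E C f"
  shows "v \<in> V \<Longrightarrow> C v = Some c \<Longrightarrow> f v = c" "\<forall>c. connected_in E {v\<in>V. f v = c}"
    and "ran C \<noteq> {} \<Longrightarrow> f ` V \<subseteq> ran C"
  using assms unfolding convex_extension_def by blast+

lemma convex_extension_imp_convex: "convex_extension V E C f \<Longrightarrow> convex V E C"
  unfolding convex_def convex_extension_def by blast

lemma convex_mono: "convex V E C \<Longrightarrow> (\<And>v c. C' v = Some c \<Longrightarrow> C v = Some c) \<Longrightarrow> convex V E C'"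
  unfolding convex_def by blast

lemma convex_imp_carriers_disjoint:
  assumes "convex V E C" "{v. C v \<noteq> None} \<subseteq> V"
  shows "carriers_disjoint V E C"
  unfolding carriers_disjoint_def
proof (intro allI impI)
  fix x1 x2 y1 y2 a b
  assume col: "C x1 = Some a" "C x2 = Some a" "C y1 = Some b" "C y2 = Some b" and "a \<noteq> b"
  obtain f where f: "\<forall>v\<in>V. \<forall>c. C v = Some c \<longrightarrow> f v = c" "\<forall>c. connected_in E {v\<in>V. f v = c}"
    using assms(1) unfolding convex_def by blast
  have "carrier V E {x1, x2} \<subseteq> {v\<in>V. f v = a}" "carrier V E {y1, y2} \<subseteq> {v\<in>V. f v = b}"
    using col f assms(2) by (intro carrier_least; auto)+
  then show "carrier V E {x1, x2} \<inter> carrier V E {y1, y2} = {}" using \<open>a \<noteq> b\<close> by blast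
qed

lemma carriers_disjoint_transfer:
  assumes "carriers_disjoint V E C"
    and "\<And>z1 z2 a. C' z1 = Some a \<Longrightarrow> C' z2 = Some a \<Longrightarrow>
          \<exists>u1 u2. C u1 = Some a \<and> C u2 = Some a \<and> carrier V' E' {z1, z2} \<subseteq> carrier V E {u1, u2}"
  shows "carriers_disjoint V' E' C'"
  unfolding carriers_disjoint_def
proof (intro allI impI)
  fix x1 x2 y1 y2 a b
  assume "C' x1 = Some a" "C' x2 = Some a" "C' y1 = Some b" "C' y2 = Some b" "a \<noteq> b"
  moreover from this obtain u1 u2 t1 t2 where
    "C u1 = Some a" "C u2 = Some a" "carrier V' E' {x1, x2} \<subseteq> carrier V E {u1, u2}"
    "C t1 = Some b" "C t2 = Some b" "carrier V' E' {y1, y2} \<subseteq> carrier V E {t1, t2}"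
    using assms(2) by meson
  ultimately show "carrier V' E' {x1, x2} \<inter> carrier V' E' {y1, y2} = {}"
    using assms(1) unfolding carriers_disjoint_def by blast
qed

lemma carriers_disjoint_remove_leaf:
  assumes "carriers_disjoint V E C" "leaf_edge E l n" "{v. C v \<noteq> None} \<subseteq> V"
  shows "carriers_disjoint (V - {l}) (E - {{l, n}}) (C(l := None))"
proof (rule carriers_disjoint_transfer[OF assms(1)])
  fix z1 z2 a assume "(C(l := None)) z1 = Some a" "(C(l := None)) z2 = Some a"
  then show "\<exists>u1 u2. C u1 = Some a \<and> C u2 = Some a
      \<and> carrier (V - {l}) (E - {{l, n}}) {z1, z2} \<subseteq> carrier V E {u1, u2}"
    using assms(3) carrier_remove_leaf[OF assms(2), of "{z1, z2}" V]
    by (auto split: if_splits)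
qed

lemma carriers_disjoint_move_to_neighbour:
  assumes "carriers_disjoint V E C" "leaf_edge E l n" "{v. C v \<noteq> None} \<subseteq> V" "n \<in> V"
    and "C l = Some c" "C x = Some c" "x \<noteq> l"
  shows "carriers_disjoint (V - {l}) (E - {{l, n}}) (C(l := None, n := Some c))"
proof (rule carriers_disjoint_transfer[OF assms(1)])
  let ?C' = "C(l := None, n := Some c)" and ?V' = "V - {l}" and ?E' = "E - {{l, n}}"
  have nl: "n \<noteq> l" using assms(2) unfolding leaf_edge_def by auto
  fix z1 z2 a assume z: "?C' z1 = Some a" "?C' z2 = Some a"
  have "z1 \<noteq> l" "z2 \<noteq> l" using z nl by (metis fun_upd_apply option.distinct(1))+
  consider "z1 = n" "z2 = n" | "z1 = n" "z2 \<noteq> n" | "z1 \<noteq> n" "z2 = n" | "z1 \<noteq> n" "z2 \<noteq> n"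
    by blast
  then show "\<exists>u1 u2. C u1 = Some a \<and> C u2 = Some a \<and> carrier ?V' ?E' {z1, z2} \<subseteq> carrier V E {u1, u2}"
  proof cases
    case 1
    then have "carrier ?V' ?E' {z1, z2} = {n}" "a = c"
      using z nl assms(4) carrier_singleton[of n ?V' ?E'] by auto
    moreover have "n \<in> carrier V E {l, x}" by (rule leaf_neighbour_in_carrier[OF assms(2,7)])
    ultimately show ?thesis using assms(5,6) by (intro exI[of _ l] exI[of _ x]) simp
  next
    case 2
    then have "a = c" "C z2 = Some a" using z \<open>z2 \<noteq> l\<close> by auto
    then show ?thesis
      using 2 carrier_remove_leaf_pair[OF assms(2) \<open>z2 \<noteq> l\<close>, where V = V] assms(5)
      by (intro exI[of _ l] exI[of _ z2]) simp
  next
    case 3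
    then have "a = c" "C z1 = Some a" using z \<open>z1 \<noteq> l\<close> by auto
    moreover have "{z1, z2} = {n, z1}" using 3 by auto
    ultimately show ?thesis
      using carrier_remove_leaf_pair[OF assms(2) \<open>z1 \<noteq> l\<close>, where V = V] assms(5)
      by (intro exI[of _ l] exI[of _ z1]) simp
  next
    case 4
    then have "C z1 = Some a" "C z2 = Some a" using z \<open>z1 \<noteq> l\<close> \<open>z2 \<noteq> l\<close> by auto
    moreover from this have "{z1, z2} \<subseteq> ?V'" using \<open>z1 \<noteq> l\<close> \<open>z2 \<noteq> l\<close> assms(3) by auto
    ultimately show ?thesis using carrier_remove_leaf[OF assms(2)] by blast
  qed
qed

lemma leaf_neighbour_colour:
  assumes "carriers_disjoint V E C" "leaf_edge E l n" "n \<in> V"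
    and "C l = Some c" "C x = Some c" "x \<noteq> l"
  shows "C n = None \<or> C n = Some c"
proof (rule ccontr)
  assume "\<not> ?thesis"
  then obtain d where "C n = Some d" "d \<noteq> c" by auto
  then have "carrier V E {l, x} \<inter> carrier V E {n, n} = {}"
    using assms(1,4,5) unfolding carriers_disjoint_def by blast
  then show False
    using leaf_neighbour_in_carrier[OF assms(2,6)] carrier_singleton[OF assms(3)] by auto
qed

lemma connected_in_classes_extend_leaf:
  assumes leaf: "leaf_edge E l n" "l \<in> V" "n \<in> V"
    and conn: "\<forall>d. connected_in (E - {{l, n}}) {v\<in>V - {l}. f v = d}"
    and new: "f n = c \<or> c \<notin> f ` (V - {l})"
  shows "connected_in E {v\<in>V. (f(l := c)) v = d}"
proof -
  have up: "connected_in E {v\<in>V - {l}. f v = d'}" for d'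
    using conn connected_in_mono_edges[of "E - {{l, n}}" E] by blast
  have "n \<noteq> l" using leaf(1) unfolding leaf_edge_def by auto
  consider "d \<noteq> c" | "d = c" "f n = c" | "d = c" "c \<notin> f ` (V - {l})" using new by blast
  then show ?thesis
  proof cases
    case 1
    then have "{v\<in>V. (f(l := c)) v = d} = {v\<in>V - {l}. f v = d}" by auto
    then show ?thesis using up by simp
  next
    case 2
    then have "{v\<in>V. (f(l := c)) v = d} = insert l {v\<in>V - {l}. f v = c}" using leaf(2) by auto
    moreover have "n \<in> {v\<in>V - {l}. f v = c}" using 2 leaf(3) \<open>n \<noteq> l\<close> by simp
    ultimately show ?thesis using connected_in_insert[OF up] leaf(1) unfolding leaf_edge_def by auto
  next
    case 3
    then have "{v\<in>V. (f(l := c)) v = d} = {l}" using leaf(2) by auto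
    then show ?thesis by (simp add: connected_in_subset_singleton)
  qed
qed

lemma convex_extension_singleton:
  assumes "{v. C v \<noteq> None} \<subseteq> {x}"
  shows "convex_extension {x} E C (\<lambda>_. case C x of Some c \<Rightarrow> c | None \<Rightarrow> undefined)"
  using assms unfolding convex_extension_def ran_def
  by (auto intro: connected_in_subset_singleton split: option.splits)

lemma convex_extension_const:
  assumes "connected_in E V" "\<forall>v. C v = None \<or> C v = Some c"
  shows "convex_extension V E C (\<lambda>_. c)"
proof -
  have colour: "d = c" if "C v = Some d" for v d
    using assms(2) that by (metis option.inject option.distinct(1))
  then have "ran C \<noteq> {} \<Longrightarrow> ran C = {c}" unfolding ran_def by blast
  moreover have "connected_in E {v\<in>V. c = d}" for d
    using assms(1) by (cases "c = d") (auto simp: connected_in_def)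
  ultimately show ?thesis using colour unfolding convex_extension_def by auto
qed

lemma convex_extension_leaf_uncoloured:
  assumes leaf: "leaf_edge E l n" "l \<in> V" "n \<in> V" and "C l = None"
    and ext: "convex_extension (V - {l}) (E - {{l, n}}) C f"
  shows "convex_extension V E C (f(l := f n))"
proof -
  have "n \<noteq> l" using leaf(1) unfolding leaf_edge_def by auto
  show ?thesis
  proof (rule convex_extensionI)
    fix v c assume "v \<in> V" "C v = Some c"
    moreover from this have "v \<noteq> l" using \<open>C l = None\<close> by auto
    ultimately show "(f(l := f n)) v = c" using convex_extensionD(1)[OF ext] by simp
  next
    show "connected_in E {v\<in>V. (f(l := f n)) v = d}" for d
      using connected_in_classes_extend_leaf[OF leaf convex_extensionD(2)[OF ext]] by blast
  next
    assume "ran C \<noteq> {}"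
    then have "f ` (V - {l}) \<subseteq> ran C" by (rule convex_extensionD(3)[OF ext])
    then show "(f(l := f n)) ` V \<subseteq> ran C" using leaf(3) \<open>n \<noteq> l\<close> by auto
  qed
qed

lemma convex_extension_leaf_shared:
  assumes leaf: "leaf_edge E l n" "l \<in> V" "n \<in> V"
    and "C l = Some c" "C n = None \<or> C n = Some c"
    and ext: "convex_extension (V - {l}) (E - {{l, n}}) (C(l := None, n := Some c)) f"
  shows "convex_extension V E C (f(l := c))"
proof -
  have "n \<noteq> l" using leaf(1) unfolding leaf_edge_def by auto
  then have fn: "f n = c" using convex_extensionD(1)[OF ext] leaf(3) by simp
  show ?thesis
  proof (rule convex_extensionI)
    fix v d assume v: "v \<in> V" "C v = Some d"
    consider "v = l" | "v = n" | "v \<noteq> l" "v \<noteq> n" by blast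
    then show "(f(l := c)) v = d"
    proof cases
      case 3
      then have "(C(l := None, n := Some c)) v = Some d" using v(2) by simp
      then show ?thesis using convex_extensionD(1)[OF ext] v(1) 3 by simp
    qed (use v assms(4,5) fn \<open>n \<noteq> l\<close> in auto)
  next
    show "connected_in E {v\<in>V. (f(l := c)) v = d}" for d
      using connected_in_classes_extend_leaf[OF leaf convex_extensionD(2)[OF ext]] fn by blast
  next
    have "c \<in> ran C" using assms(4) unfolding ran_def by auto
    then have "ran (C(l := None, n := Some c)) \<subseteq> ran C" "ran (C(l := None, n := Some c)) \<noteq> {}"
      unfolding ran_def by auto
    then show "(f(l := c)) ` V \<subseteq> ran C"
      using convex_extensionD(3)[OF ext] \<open>c \<in> ran C\<close> by auto
  qed
qed

lemma convex_extension_leaf_private: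
  assumes leaf: "leaf_edge E l n" "l \<in> V" "n \<in> V"
    and "C l = Some c" "\<forall>x. C x = Some c \<longrightarrow> x = l" "ran (C(l := None)) \<noteq> {}"
    and ext: "convex_extension (V - {l}) (E - {{l, n}}) (C(l := None)) f"
  shows "convex_extension V E C (f(l := c))"
proof -
  have "(C(l := None)) x \<noteq> Some c" for x
    using assms(5) by (cases "x = l") auto
  then have ran: "ran (C(l := None)) \<subseteq> ran C" "c \<notin> ran (C(l := None))" "c \<in> ran C"
    using assms(4) unfolding ran_def by (auto split: if_splits)
  have image: "f ` (V - {l}) \<subseteq> ran (C(l := None))" by (rule convex_extensionD(3)[OF ext assms(6)])
  show ?thesis
  proof (rule convex_extensionI)
    fix v d assume v: "v \<in> V" "C v = Some d"
    show "(f(l := c)) v = d"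
    proof (cases "v = l")
      case False
      then have "(C(l := None)) v = Some d" using v(2) by simp
      then show ?thesis using convex_extensionD(1)[OF ext] v(1) False by simp
    qed (use v assms(4) in simp)
  next
    have "c \<notin> f ` (V - {l})" using image ran(2) by blast
    then show "connected_in E {v\<in>V. (f(l := c)) v = d}" for d
      using connected_in_classes_extend_leaf[OF leaf convex_extensionD(2)[OF ext]] by blast
  next
    show "(f(l := c)) ` V \<subseteq> ran C" using image ran(1,3) by auto
  qed
qed

lemma convex_extension_leaf_step:
  fixes C :: "'v \<Rightarrow> 'c option"
  assumes T: "is_tree V E" and leaf: "leaf_edge E l n" "l \<in> V" "n \<in> V"
    and dom: "{v. C v \<noteq> None} \<subseteq> V" and disj: "carriers_disjoint V E C"
    and IH: "\<And>C' :: 'v \<Rightarrow> 'c option. {v. C' v \<noteq> None} \<subseteq> V - {l} \<Longrightarrow>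
      carriers_disjoint (V - {l}) (E - {{l, n}}) C' \<Longrightarrow> \<exists>f. convex_extension (V - {l}) (E - {{l, n}}) C' f"
  shows "\<exists>f. convex_extension V E C f"
proof -
  have "n \<noteq> l" using leaf(1) unfolding leaf_edge_def by auto
  have dom_del: "{v. (C(l := None)) v \<noteq> None} \<subseteq> V - {l}" using dom by auto
  have disj_del: "carriers_disjoint (V - {l}) (E - {{l, n}}) (C(l := None))"
    by (rule carriers_disjoint_remove_leaf[OF disj leaf(1) dom])
  show ?thesis
  proof (cases "C l")
    case None
    then have "C(l := None) = C" by auto
    then obtain f where "convex_extension (V - {l}) (E - {{l, n}}) C f"
      using IH[OF dom_del disj_del] by auto
    then show ?thesis using convex_extension_leaf_uncoloured[where C = C, OF leaf None] by blast
  next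
    case (Some c)
    consider x where "x \<noteq> l" "C x = Some c" | "\<forall>x. C x = Some c \<longrightarrow> x = l" by blast
    then show ?thesis
    proof cases
      case (1 x)
      have "{v. (C(l := None, n := Some c)) v \<noteq> None} \<subseteq> V - {l}"
        using dom leaf(3) \<open>n \<noteq> l\<close> by auto
      then obtain f where "convex_extension (V - {l}) (E - {{l, n}}) (C(l := None, n := Some c)) f"
        using IH carriers_disjoint_move_to_neighbour[OF disj leaf(1) dom leaf(3) Some 1(2,1)] by blast
      moreover have "C n = None \<or> C n = Some c"
        by (rule leaf_neighbour_colour[OF disj leaf(1,3) Some 1(2,1)])
      ultimately show ?thesis using convex_extension_leaf_shared[where C = C, OF leaf Some] by blast
    next
      case 2
      show ?thesis
      proof (cases "ran (C(l := None)) = {}")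
        case True
        then have "(C(l := None)) v = None" for v by (metis empty_iff option.exhaust ranI)
        then have "\<forall>v. C v = None \<or> C v = Some c" using Some by (metis fun_upd_apply)
        then show ?thesis using convex_extension_const[of E V C c] T unfolding is_tree_def by blast
      next
        case False
        obtain f where "convex_extension (V - {l}) (E - {{l, n}}) (C(l := None)) f"
          using IH[OF dom_del disj_del] by blast
        then show ?thesis using convex_extension_leaf_private[where C = C, OF leaf Some 2 False] by blast
      qed
    qed
  qed
qed

lemma carriers_disjoint_imp_convex_extension:
  "is_tree V E \<Longrightarrow> {v. C v \<noteq> None} \<subseteq> V \<Longrightarrow> carriers_disjoint V E C \<Longrightarrow>
    \<exists>f. convex_extension V E C f"
proof (induction "card V" arbitrary: V E C rule: less_induct)
  case less
  note T = less.prems(1)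
  show ?case
  proof (cases "2 \<le> card V")
    case False
    moreover have "card V \<noteq> 0" using T unfolding is_tree_def by simp
    ultimately have "card V = 1" by linarith
    then obtain x where "V = {x}" by (rule card_1_singletonE)
    then show ?thesis using convex_extension_singleton[of C x E] less.prems(2) by auto
  next
    case True
    then obtain l n where leaf: "leaf_edge E l n" "l \<in> V" "n \<in> V" using tree_has_leaf T by blast
    then have "card (V - {l}) < card V" using T unfolding is_tree_def by (simp add: card_gt_0_iff)
    from less.hyps[OF this is_tree_remove_leaf[OF T leaf]]
    show ?thesis by (rule convex_extension_leaf_step[OF T leaf less.prems(2,3)])
  qed
qed

theorem convex_iff_carriers_disjoint:
  assumes "is_tree V E" "{v. C v \<noteq> None} \<subseteq> V"
  shows "convex V E C \<longleftrightarrow> carriers_disjoint V E C"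
proof
  show "convex V E C \<Longrightarrow> carriers_disjoint V E C" by (rule convex_imp_carriers_disjoint[OF _ assms(2)])
  assume "carriers_disjoint V E C"
  then obtain f where "convex_extension V E C f"
    using carriers_disjoint_imp_convex_extension[OF assms] by blast
  then show "convex V E C" by (rule convex_extension_imp_convex)
qed

section \<open>The procedure\<close>

lemma restrict_col_supp_complement:
  assumes "\<forall>v. C v \<noteq> None \<longleftrightarrow> v \<in> supp V w"
  shows "restrict_col C ({v. C v \<noteq> None} - (V - supp V w)) = C"
  using assms unfolding restrict_col_def supp_def by fastforce

lemma valid_choice_exists:
  assumes T: "is_tree V E" and dom: "\<forall>v. C v \<noteq> None \<longleftrightarrow> v \<in> supp V w"
    and "\<not> is_cover V E C (V - supp V w)"
  shows "\<exists>x1 x2 y1 y2. valid_choice V E C w x1 x2 y1 y2"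
proof -
  have "{v. C v \<noteq> None} \<subseteq> V" using dom unfolding supp_def by auto
  moreover have "\<not> convex V E C"
    using assms(3) restrict_col_supp_complement[OF dom] unfolding is_cover_def by simp
  ultimately have "\<not> carriers_disjoint V E C" using convex_iff_carriers_disjoint[OF T] by blast
  then obtain x1 x2 y1 y2 a b where
    "C x1 = Some a" "C x2 = Some a" "C y1 = Some b" "C y2 = Some b" "a \<noteq> b"
    "carrier V E {x1, x2} \<inter> carrier V E {y1, y2} \<noteq> {}"
    unfolding carriers_disjoint_def by blast
  moreover from this have "{x1, x2, y1, y2} \<subseteq> supp V w" using dom by blast
  ultimately have "valid_choice V E C w x1 x2 y1 y2" unfolding valid_choice_def by simp
  then show ?thesis by blast
qed

lemma new_weightE:
  assumes "valid_choice V E C w x1 x2 y1 y2"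
  obtains \<epsilon> where "0 < \<epsilon>" "\<forall>v\<in>{x1, x2, y1, y2}. \<epsilon> \<le> w v" "\<exists>z\<in>{x1, x2, y1, y2}. w z = \<epsilon>"
    "new_weight w x1 x2 y1 y2 = (\<lambda>v. if v \<in> {x1, x2, y1, y2} then w v - \<epsilon> else w v)"
proof
  let ?A = "{w x1, w x2, w y1, w y2}"
  have "\<forall>a\<in>?A. 0 < a" using assms unfolding valid_choice_def supp_def by auto
  then show "0 < Min ?A" by simp
  show "\<forall>v\<in>{x1, x2, y1, y2}. Min ?A \<le> w v" by (auto intro!: Min_le)
  have "Min ?A \<in> ?A" by (rule Min_in) auto
  then show "\<exists>z\<in>{x1, x2, y1, y2}. w z = Min ?A" by auto
  show "new_weight w x1 x2 y1 y2 = (\<lambda>v. if v \<in> {x1, x2, y1, y2} then w v - Min ?A else w v)"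
    unfolding new_weight_def Let_def ..
qed

lemma supp_new_weight_psubset:
  assumes "valid_choice V E C w x1 x2 y1 y2"
  shows "supp V (new_weight w x1 x2 y1 y2) \<subset> supp V w"
proof -
  let ?S = "{x1, x2, y1, y2}"
  obtain \<epsilon> where "0 < \<epsilon>" "\<forall>v\<in>?S. \<epsilon> \<le> w v" "\<exists>z\<in>?S. w z = \<epsilon>"
    and w': "new_weight w x1 x2 y1 y2 = (\<lambda>v. if v \<in> ?S then w v - \<epsilon> else w v)"
    by (rule new_weightE[OF assms])
  then obtain z where z: "z \<in> ?S" "w z = \<epsilon>" by blast
  have "supp V (new_weight w x1 x2 y1 y2) \<subseteq> supp V w"
    unfolding supp_def w' using \<open>0 < \<epsilon>\<close> by auto
  moreover have "z \<in> supp V w" using assms z(1) unfolding valid_choice_def by blast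
  moreover have "z \<notin> supp V (new_weight w x1 x2 y1 y2)" unfolding supp_def w' using z by simp
  ultimately show ?thesis by blast
qed

lemma proc_step_Pair:
  "proc_step V E (C, w) (C', w') \<longleftrightarrow> \<not> is_cover V E C (V - supp V w) \<and>
     (\<exists>x1 x2 y1 y2. valid_choice V E C w x1 x2 y1 y2
        \<and> w' = new_weight w x1 x2 y1 y2 \<and> C' = restrict_col C (supp V w'))"
  by (simp add: proc_step_def)

lemma proc_step_supp_psubset:
  assumes "proc_step V E (C, w) (C', w')"
  shows "supp V w' \<subset> supp V w"
proof -
  obtain x1 x2 y1 y2 where "valid_choice V E C w x1 x2 y1 y2" "w' = new_weight w x1 x2 y1 y2"
    using assms unfolding proc_step_Pair by blast
  then show ?thesis using supp_new_weight_psubset by simp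
qed

lemma proc_step_domain:
  assumes "proc_step V E (C, w) (C', w')" "\<forall>v. C v \<noteq> None \<longleftrightarrow> v \<in> supp V w"
  shows "\<forall>v. C' v \<noteq> None \<longleftrightarrow> v \<in> supp V w'"
proof -
  have "C' = restrict_col C (supp V w')" using assms(1) unfolding proc_step_Pair by blast
  then show ?thesis
    using assms(2) proc_step_supp_psubset[OF assms(1)] unfolding restrict_col_def by auto
qed

lemma proc_step_nonneg:
  assumes "proc_step V E (C, w) (C', w')" "\<forall>v\<in>V. 0 \<le> w v"
  shows "\<forall>v\<in>V. 0 \<le> w' v"
proof -
  obtain x1 x2 y1 y2 where vc: "valid_choice V E C w x1 x2 y1 y2"
    and w': "w' = new_weight w x1 x2 y1 y2"
    using assms(1) unfolding proc_step_Pair by blast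
  obtain \<epsilon> where "0 < \<epsilon>" "\<forall>v\<in>{x1, x2, y1, y2}. \<epsilon> \<le> w v" "\<exists>z\<in>{x1, x2, y1, y2}. w z = \<epsilon>"
    and "new_weight w x1 x2 y1 y2 = (\<lambda>v. if v \<in> {x1, x2, y1, y2} then w v - \<epsilon> else w v)"
    by (rule new_weightE[OF vc])
  then show ?thesis using assms(2) unfolding w' by auto
qed

lemma proc_step_no_infinite_run:
  assumes "finite V"
  shows "\<not> (\<exists>f. f 0 = s \<and> (\<forall>n. proc_step V E (f n) (f (Suc n))))"
proof
  assume "\<exists>f. f 0 = s \<and> (\<forall>n. proc_step V E (f n) (f (Suc n)))"
  then obtain f where "f 0 = s" and run: "\<forall>n. proc_step V E (f n) (f (Suc n))" by blast
  have "(f (Suc n), f n) \<in> measure (\<lambda>s. card (supp V (snd s)))" for n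
  proof -
    have "proc_step V E (fst (f n), snd (f n)) (fst (f (Suc n)), snd (f (Suc n)))"
      using run by simp
    then have "supp V (snd (f (Suc n))) \<subset> supp V (snd (f n))"
      by (rule proc_step_supp_psubset)
    moreover have "finite (supp V (snd (f n)))" using assms unfolding supp_def by simp
    ultimately show ?thesis by (simp add: psubset_card_mono)
  qed
  then show False using wf_no_infinite_down_chainE[OF wf_measure] by blast
qed

lemma proc_out_exists:
  assumes "is_tree V E" "\<forall>v. C v \<noteq> None \<longleftrightarrow> v \<in> supp V w"
  shows "\<exists>X. proc_out V E C w X"
  using assms(2)
proof (induction "card (supp V w)" arbitrary: C w rule: less_induct)
  case less
  show ?case
  proof (cases "is_cover V E C (V - supp V w)")
    case True
    then show ?thesis using proc_out.stop by blast
  next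
    case False
    then obtain x1 x2 y1 y2 where vc: "valid_choice V E C w x1 x2 y1 y2"
      using valid_choice_exists[OF assms(1) less.prems] by blast
    define w' where "w' = new_weight w x1 x2 y1 y2"
    define C' where "C' = restrict_col C (supp V w')"
    have step: "proc_step V E (C, w) (C', w')"
      unfolding proc_step_Pair using False vc w'_def C'_def by blast
    have "finite (supp V w)" using assms(1) unfolding is_tree_def supp_def by simp
    then have "card (supp V w') < card (supp V w)"
      using proc_step_supp_psubset[OF step] by (simp add: psubset_card_mono)
    then obtain X where "proc_out V E C' w' X"
      using less.hyps proc_step_domain[OF step less.prems] by blast
    then show ?thesis using proc_out.rec[OF step] by blast
  qed
qed

lemma proc_out_zero_weight_subset: "proc_out V E C w X \<Longrightarrow> V - supp V w \<subseteq> X"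
proof (induction rule: proc_out.induct)
  case (rec C w C' w' X)
  then show ?case using proc_step_supp_psubset by blast
qed simp

section \<open>Approximation ratio\<close>

lemma is_cover_whole:
  assumes "connected_in E V"
  shows "is_cover V E C V"
proof -
  have "connected_in E {v\<in>V. undefined = c}" for c
    using assms by (cases "undefined = c") (auto simp: connected_in_def)
  then show ?thesis unfolding is_cover_def convex_def restrict_col_def
    by (intro conjI exI[of _ "\<lambda>_. undefined"]) auto
qed

lemma finite_cover_weights: "finite V \<Longrightarrow> finite {sum w X | X. is_cover V E C X}"
  using finite_subset[of "{X. is_cover V E C X}" "Pow V"]
  unfolding is_cover_def by (simp add: image_Collect[symmetric])

lemma OPT_le: "finite V \<Longrightarrow> is_cover V E C X \<Longrightarrow> OPT V E C w \<le> sum w X"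
  unfolding OPT_def using finite_cover_weights by (intro Min_le) blast+

lemma OPT_attained:
  assumes "is_tree V E"
  obtains X where "is_cover V E C X" "OPT V E C w = sum w X"
proof -
  have "{sum w X | X. is_cover V E C X} \<noteq> {}"
    using is_cover_whole assms unfolding is_tree_def by blast
  then have "OPT V E C w \<in> {sum w X | X. is_cover V E C X}"
    using finite_cover_weights assms unfolding OPT_def is_tree_def by (intro Min_in) blast+
  then show ?thesis using that by blast
qed

lemma OPT_nonneg:
  assumes "is_tree V E" "\<forall>v\<in>V. 0 \<le> w v"
  shows "0 \<le> OPT V E C w"
proof -
  obtain X where "is_cover V E C X" "OPT V E C w = sum w X" by (rule OPT_attained[OF assms(1)])
  then show ?thesis using assms(2) unfolding is_cover_def by (auto intro: sum_nonneg)
qed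

lemma is_cover_restrict_col:
  assumes "is_cover V E C X"
  shows "is_cover V E (restrict_col C S) X"
  using assms convex_mono unfolding is_cover_def by (fastforce simp: restrict_col_def)

lemma is_cover_restrict_col_iff:
  assumes "{v. C v \<noteq> None} - X \<subseteq> S"
  shows "is_cover V E (restrict_col C S) X \<longleftrightarrow> is_cover V E C X"
proof -
  have "restrict_col (restrict_col C S) ({v. restrict_col C S v \<noteq> None} - X)
      = restrict_col C ({v. C v \<noteq> None} - X)"
    using assms by (auto simp: restrict_col_def fun_eq_iff)
  then show ?thesis unfolding is_cover_def by simp
qed

lemma valid_choice_hits_cover:
  assumes cover: "is_cover V E C X" and vc: "valid_choice V E C w x1 x2 y1 y2"
    and dom: "\<forall>v. C v \<noteq> None \<longleftrightarrow> v \<in> supp V w"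
  shows "X \<inter> {x1, x2, y1, y2} \<noteq> {}"
proof
  assume disjoint: "X \<inter> {x1, x2, y1, y2} = {}"
  let ?C = "restrict_col C ({v. C v \<noteq> None} - X)"
  have "{v. ?C v \<noteq> None} \<subseteq> V" using dom unfolding restrict_col_def supp_def by auto
  then have disj: "carriers_disjoint V E ?C"
    using convex_imp_carriers_disjoint cover unfolding is_cover_def by blast
  have S: "{x1, x2, y1, y2} \<subseteq> supp V w"
    and eq: "C x1 = C x2" "C y1 = C y2" "C x1 \<noteq> C y1"
    and meet: "carrier V E {x1, x2} \<inter> carrier V E {y1, y2} \<noteq> {}"
    using vc unfolding valid_choice_def by blast+
  have agree: "?C z = C z" if "z \<in> {x1, x2, y1, y2}" for z
  proof -
    have "z \<notin> X" using that disjoint by blast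
    moreover have "C z \<noteq> None" using that S dom by blast
    ultimately show ?thesis unfolding restrict_col_def by simp
  qed
  have "C x1 \<noteq> None" "C y1 \<noteq> None" using S dom by auto
  then obtain a b where "C x1 = Some a" "C y1 = Some b" by blast
  then have "?C x1 = Some a" "?C x2 = Some a" "?C y1 = Some b" "?C y2 = Some b" "a \<noteq> b"
    using agree eq by simp_all
  then show False
    using disj meet unfolding carriers_disjoint_def by blast
qed

lemma sum_decrement:
  fixes w :: "'v \<Rightarrow> real"
  assumes "finite X"
  shows "sum w X = sum (\<lambda>v. if v \<in> S then w v - \<epsilon> else w v) X + \<epsilon> * card (X \<inter> S)"
proof -
  have "sum w X = (\<Sum>v\<in>X. (if v \<in> S then w v - \<epsilon> else w v) + (if v \<in> S then \<epsilon> else 0))"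
    by (rule sum.cong) auto
  also have "\<dots> = sum (\<lambda>v. if v \<in> S then w v - \<epsilon> else w v) X + (\<Sum>v\<in>X. if v \<in> S then \<epsilon> else 0)"
    by (rule sum.distrib)
  also have "(\<Sum>v\<in>X. if v \<in> S then \<epsilon> else 0) = (\<Sum>v\<in>{v\<in>X. v \<in> S}. \<epsilon>)"
    by (rule sum.inter_filter[OF assms, symmetric])
  also have "\<dots> = \<epsilon> * card (X \<inter> S)"
    by (simp add: Int_def mult.commute)
  finally show ?thesis .
qed

lemma proc_step_cover:
  assumes step: "proc_step V E (C, w) (C', w')" and dom: "\<forall>v. C v \<noteq> None \<longleftrightarrow> v \<in> supp V w"
    and zero: "V - supp V w' \<subseteq> X" and cover: "is_cover V E C' X"
  shows "is_cover V E C X"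
proof -
  have "C' = restrict_col C (supp V w')" using step unfolding proc_step_Pair by blast
  moreover have "{v. C v \<noteq> None} - X \<subseteq> supp V w'" using dom zero unfolding supp_def by auto
  ultimately show ?thesis using cover is_cover_restrict_col_iff by blast
qed

text \<open>Local ratio: every cover, in particular an optimal one, pays at least \<open>\<epsilon>\<close> on the four
  lowered vertices, while \<open>X\<close> pays at most \<open>4\<epsilon>\<close> there.\<close>
lemma proc_step_local_ratio:
  assumes T: "is_tree V E" and dom: "\<forall>v. C v \<noteq> None \<longleftrightarrow> v \<in> supp V w"
    and step: "proc_step V E (C, w) (C', w')"
    and "X \<subseteq> V" and bound: "sum w' X \<le> 4 * OPT V E C' w'"
  shows "sum w X \<le> 4 * OPT V E C w"
proof -
  obtain x1 x2 y1 y2 where vc: "valid_choice V E C w x1 x2 y1 y2"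
    and w': "w' = new_weight w x1 x2 y1 y2" and C': "C' = restrict_col C (supp V w')"
    using step unfolding proc_step_Pair by blast
  let ?S = "{x1, x2, y1, y2}"
  obtain \<epsilon> where "0 < \<epsilon>" "\<forall>v\<in>?S. \<epsilon> \<le> w v" "\<exists>z\<in>?S. w z = \<epsilon>"
    and w'_eq: "w' = (\<lambda>v. if v \<in> ?S then w v - \<epsilon> else w v)"
    unfolding w' by (rule new_weightE[OF vc])
  have fin: "finite V" using T unfolding is_tree_def by simp
  obtain X0 where X0: "is_cover V E C X0" "OPT V E C w = sum w X0" by (rule OPT_attained[OF T])
  have "finite X0" using X0(1) fin finite_subset unfolding is_cover_def by blast
  then have "1 \<le> card (X0 \<inter> ?S)"
    using valid_choice_hits_cover[OF X0(1) vc dom] by (simp add: Suc_le_eq card_gt_0_iff)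
  have "card (X \<inter> ?S) \<le> card ?S" by (rule card_mono) auto
  also have "\<dots> \<le> 4" using card_length[of "[x1, x2, y1, y2]"] by simp
  finally have "\<epsilon> * card (X \<inter> ?S) \<le> \<epsilon> * 4"
    using \<open>0 < \<epsilon>\<close> by (intro mult_left_mono) simp_all
  have "OPT V E C' w' \<le> sum w' X0"
    using OPT_le[OF fin is_cover_restrict_col[OF X0(1)]] unfolding C' .
  have "sum w X = sum w' X + \<epsilon> * card (X \<inter> ?S)"
    unfolding w'_eq using sum_decrement finite_subset[OF \<open>X \<subseteq> V\<close> fin] by blast
  also have "\<dots> \<le> 4 * sum w' X0 + 4 * \<epsilon>"
    using bound \<open>OPT V E C' w' \<le> sum w' X0\<close> \<open>\<epsilon> * card (X \<inter> ?S) \<le> \<epsilon> * 4\<close> by linarith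
  also have "\<dots> \<le> 4 * (sum w' X0 + \<epsilon> * card (X0 \<inter> ?S))"
    using \<open>1 \<le> card (X0 \<inter> ?S)\<close> \<open>0 < \<epsilon>\<close> by simp
  also have "\<dots> = 4 * OPT V E C w"
    unfolding X0(2) w'_eq using sum_decrement \<open>finite X0\<close> by metis
  finally show ?thesis .
qed

lemma proc_out_sound:
  "proc_out V E C w X \<Longrightarrow> is_tree V E \<Longrightarrow> \<forall>v\<in>V. 0 \<le> w v \<Longrightarrow>
    \<forall>v. C v \<noteq> None \<longleftrightarrow> v \<in> supp V w \<Longrightarrow> is_cover V E C X \<and> sum w X \<le> 4 * OPT V E C w"
proof (induction rule: proc_out.induct)
  case (stop C w)
  have "sum w (V - supp V w) = 0"
    using stop.prems(2) unfolding supp_def by (intro sum.neutral) force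
  then show ?case using stop.hyps OPT_nonneg[OF stop.prems(1,2)] by simp
next
  case (rec C w C' w' X)
  note T = rec.prems(1) and dom = rec.prems(3)
  have "\<forall>v\<in>V. 0 \<le> w' v" "\<forall>v. C' v \<noteq> None \<longleftrightarrow> v \<in> supp V w'"
    using proc_step_nonneg[OF rec.hyps(1) rec.prems(2)] proc_step_domain[OF rec.hyps(1) dom] .
  then have "is_cover V E C' X" "sum w' X \<le> 4 * OPT V E C' w'"
    using rec.IH[OF T] by blast+
  moreover have "V - supp V w' \<subseteq> X" by (rule proc_out_zero_weight_subset[OF rec.hyps(2)])
  moreover have "X \<subseteq> V" using \<open>is_cover V E C' X\<close> unfolding is_cover_def by blast
  ultimately show ?case
    using proc_step_cover[OF rec.hyps(1) dom] proc_step_local_ratio[OF T dom rec.hyps(1)] by blast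
qed

theorem mainTheorem6:
  fixes V :: "'v set" and E :: "'v set set" and C :: "'v \<Rightarrow> 'c option" and w :: "'v \<Rightarrow> real"
  assumes "is_tree V E"
    and "\<forall>v\<in>V. w v \<ge> 0"
    and "\<forall>v. C v \<noteq> None \<longleftrightarrow> v \<in> supp V w"
  shows "(\<not> is_cover V E C (V - supp V w) \<longrightarrow> (\<exists>x1 x2 y1 y2. valid_choice V E C w x1 x2 y1 y2))
    \<and> \<not> (\<exists>f. f 0 = (C, w) \<and> (\<forall>n. proc_step V E (f n) (f (Suc n))))
    \<and> (\<exists>X. proc_out V E C w X)
    \<and> (\<forall>X. proc_out V E C w X \<longrightarrow> is_cover V E C X \<and> sum w X \<le> 4 * OPT V E C w)"
proof (intro conjI impI allI)
  show "\<exists>x1 x2 y1 y2. valid_choice V E C w x1 x2 y1 y2" if "\<not> is_cover V E C (V - supp V w)"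
    using valid_choice_exists[OF assms(1,3) that] .
  show "\<not> (\<exists>f. f 0 = (C, w) \<and> (\<forall>n. proc_step V E (f n) (f (Suc n))))"
    using proc_step_no_infinite_run assms(1) unfolding is_tree_def by blast
  show "\<exists>X. proc_out V E C w X" by (rule proc_out_exists[OF assms(1,3)])
  show "is_cover V E C X" "sum w X \<le> 4 * OPT V E C w" if "proc_out V E C w X" for X
    using proc_out_sound[OF that assms(1)] assms(2,3) by blast+
qed

end
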